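(* Let $\mathcal{F}$ be a linear $3$-uniform family and let $\mathcal{M}$ be a maximum matching of $\mathcal{F}$. If $A,B,C$ are three distinct members of $\mathcal{M}$ and $|D_2(A,B)|=8$, then $|D_2(A,C)|+|D_2(B,C)|\leq 12$.
   Context: A family is a finite collection of distinct subsets of a vertex set; $3$-uniform means every member has exactly $3$ elements and linear means any two distinct members share at most one vertex. A matching is a collection of pairwise disjoint members; a maximum matching is one of largest possible size. $X_{\mathcal{M}}=\bigcup_{A\in\mathcal{M}}A$, $D_2(\mathcal{F})=\{E\in\mathcal{F}:|E\cap X_{\mathcal{M}}|=2\}$, and for $A,B\in\mathcal{M}$, $D_2(A,B)=\{E\in D_2(\mathcal{F}): E\cap A\neq\emptyset,\ E\cap B\neq\emptyset\}$. *)

theory Defs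
  imports Main
begin

definition uniform3 :: "'a set set \<Rightarrow> bool" where
  "uniform3 F \<longleftrightarrow> (\<forall>E\<in>F. card E = 3)"

definition linear_family :: "'a set set \<Rightarrow> bool" where
  "linear_family F \<longleftrightarrow> (\<forall>E\<in>F. \<forall>E'\<in>F. E \<noteq> E' \<longrightarrow> card (E \<inter> E') \<le> 1)"

definition matching_of :: "'a set set \<Rightarrow> 'a set set \<Rightarrow> bool" where
  "matching_of F M \<longleftrightarrow> M \<subseteq> F \<and> (\<forall>A\<in>M. \<forall>B\<in>M. A \<noteq> B \<longrightarrow> A \<inter> B = {})"

definition maximum_matching :: "'a set set \<Rightarrow> 'a set set \<Rightarrow> bool" where
  "maximum_matching F M \<longleftrightarrow> matching_of F M \<and>
     (\<forall>M'. matching_of F M' \<longrightarrow> card M' \<le> card M)"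

definition X_M :: "'a set set \<Rightarrow> 'a set" where
  "X_M M = \<Union>M"

definition D2 :: "'a set set \<Rightarrow> 'a set set \<Rightarrow> 'a set set" where
  "D2 F M = {E \<in> F. card (E \<inter> X_M M) = 2}"

definition D2_pair :: "'a set set \<Rightarrow> 'a set set \<Rightarrow> 'a set \<Rightarrow> 'a set \<Rightarrow> 'a set set" where
  "D2_pair F M A B = {E \<in> D2 F M. E \<inter> A \<noteq> {} \<and> E \<inter> B \<noteq> {}}"

end

theory Submission
  imports Defs
begin

text \<open>A pair \<open>{u, v}\<close> of vertices of \<open>X\<^sub>M\<close> is the trace of a member of \<open>D\<^sub>2\<close> iff
  \<open>{u, v, x} \<in> F\<close> for some \<open>x \<notin> X\<^sub>M\<close>; by linearity this outer vertex \<open>x\<close> is unique, and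
  two such pairs sharing a vertex have different outer vertices, so outer vertices properly colour
  the linked pairs. Maximality of \<open>M\<close> forbids rainbow matchings: \<open>k\<close> disjoint linked pairs with
  distinct outer vertices inside the union of \<open>r\<close> members of \<open>M\<close> give \<open>k\<close> disjoint triples that
  can replace those members, so \<open>k \<le> r\<close>.
  If \<open>|D\<^sub>2(A, B)| = 8\<close>, every pair of \<open>A \<times> B\<close> except one, \<open>a\<^sub>3b\<^sub>3\<close>, is linked. A finite
  check then shows that, without rainbow 3-matchings in \<open>A \<union> B\<close> and rainbow 4-matchings in
  \<open>A \<union> B \<union> C\<close>, at most 4 pairs join \<open>C\<close> to \<open>{a\<^sub>3, b\<^sub>3}\<close> and at most 8 join \<open>C\<close> to the
  other four vertices of \<open>A \<union> B\<close>.\<close>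

lemma subset_eq_Diff_singleton_if_card_Suc:
  assumes "finite S" "T \<subseteq> S" "Suc (card T) = card S"
  obtains p where "p \<in> S" "T = S - {p}"
proof -
  have "card (S - T) = 1"
    using assms by (simp add: card_Diff_subset finite_subset)
  then obtain p where "S - T = {p}"
    by (auto simp: card_1_singleton_iff)
  with assms(2) show thesis
    by (intro that[of p]) auto
qed

lemma card_filter_Times_Un:
  assumes "finite U" "finite V" "finite W" "U \<inter> V = {}"
  shows "card {(u, w) \<in> (U \<union> V) \<times> W. R u w}
    = card {(u, w) \<in> U \<times> W. R u w} + card {(u, w) \<in> V \<times> W. R u w}"
proof -
  have "{(u, w) \<in> (U \<union> V) \<times> W. R u w} = {(u, w) \<in> U \<times> W. R u w} \<union> {(u, w) \<in> V \<times> W. R u w}"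
    by auto
  moreover have "finite {(u, w) \<in> U \<times> W. R u w}" "finite {(u, w) \<in> V \<times> W. R u w}"
    using assms by (auto intro: finite_subset[of _ "U \<times> W"] finite_subset[of _ "V \<times> W"])
  ultimately show ?thesis
    using assms(4) by (subst card_Un_disjoint[symmetric]) auto
qed

lemma card_eq_3_imp_finite: "card E = 3 \<Longrightarrow> finite E"
  by (rule card_ge_0_finite) simp

locale rainbow_free_three_blocks =
  fixes adj :: "'v \<Rightarrow> 'v \<Rightarrow> bool" and col :: "'v \<Rightarrow> 'v \<Rightarrow> 'c"
    and a1 a2 a3 b1 b2 b3 c1 c2 c3 :: 'v
  assumes distinct_vertices: "distinct [a1, a2, a3, b1, b2, b3, c1, c2, c3]"
    and col_neq: "adj u v \<Longrightarrow> adj u' v' \<Longrightarrow> {u, v} \<noteq> {u', v'} \<Longrightarrow> {u, v} \<inter> {u', v'} \<noteq> {}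
      \<Longrightarrow> col u v \<noteq> col u' v'"
    and no_rainbow_3: "\<lbrakk>distinct [u1, v1, u2, v2, u3, v3];
      {u1, v1, u2, v2, u3, v3} \<subseteq> {a1, a2, a3, b1, b2, b3};
      adj u1 v1; adj u2 v2; adj u3 v3; distinct [col u1 v1, col u2 v2, col u3 v3]\<rbrakk> \<Longrightarrow> False"
    and no_rainbow_4: "\<lbrakk>distinct [u1, v1, u2, v2, u3, v3, u4, v4];
      {u1, v1, u2, v2, u3, v3, u4, v4} \<subseteq> {a1, a2, a3, b1, b2, b3, c1, c2, c3};
      adj u1 v1; adj u2 v2; adj u3 v3; adj u4 v4;
      distinct [col u1 v1, col u2 v2, col u3 v3, col u4 v4]\<rbrakk> \<Longrightarrow> False"
    and adj_blocks: "adj a1 b1" "adj a1 b2" "adj a1 b3" "adj a2 b1" "adj a2 b2" "adj a2 b3"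
      "adj a3 b1" "adj a3 b2"
begin

lemmas vertices_neq [simp] = distinct_vertices[simplified]

lemma col_neq_same_first: "adj u v \<Longrightarrow> adj u w \<Longrightarrow> v \<noteq> w \<Longrightarrow> col u v \<noteq> col u w"
  by (rule col_neq) (auto simp: doubleton_eq_iff)

lemma col_neq_same_second: "adj u w \<Longrightarrow> adj v w \<Longrightarrow> u \<noteq> v \<Longrightarrow> col u w \<noteq> col v w"
  by (rule col_neq) (auto simp: doubleton_eq_iff)

lemma col_neq_chain: "adj u v \<Longrightarrow> adj v w \<Longrightarrow> u \<noteq> w \<Longrightarrow> col u v \<noteq> col v w"
  by (rule col_neq) (auto simp: doubleton_eq_iff)

lemma card_adj_eq_sum:
  assumes "finite U"
  shows "int (card {(u, c) \<in> U \<times> {c1, c2, c3}. adj u c})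
    = (\<Sum>u\<in>U. of_bool (adj u c1) + of_bool (adj u c2) + of_bool (adj u c3))"
proof -
  have "int (card {(u, c) \<in> U \<times> {c1, c2, c3}. adj u c})
      = (\<Sum>p\<in>U \<times> {c1, c2, c3}. of_bool (adj (fst p) (snd p)))"
    using assms by (subst sum_of_bool_eq) (auto intro!: arg_cong[where f = card])
  also have "\<dots> = (\<Sum>u\<in>U. \<Sum>c\<in>{c1, c2, c3}. of_bool (adj u c))"
    by (simp only: sum.cartesian_product case_prod_unfold)
  finally show ?thesis
    by (simp add: add.assoc del: sum_of_bool_eq)
qed

text \<open>Each rainbow 4-matching used consists of two pairs at distinct
  vertices \<open>c\<^sub>k\<close> and a perfect matching of the remaining four vertices \<open>a\<^sub>i\<close>, \<open>b\<^sub>j\<close>.\<close>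

lemma missing_pair_card_le: "card {(u, c) \<in> {a3, b3} \<times> {c1, c2, c3}. adj u c} \<le> 4"
proof -
  have "int (card {(u, c) \<in> {a3, b3} \<times> {c1, c2, c3}. adj u c})
      = of_bool (adj a3 c1) + of_bool (adj a3 c2) + of_bool (adj a3 c3)
      + (of_bool (adj b3 c1) + of_bool (adj b3 c2) + of_bool (adj b3 c3))"
    by (subst card_adj_eq_sum) simp_all
  also have "\<dots> \<le> 4"
    using adj_blocks vertices_neq
      col_neq_same_first[of a1 b1 b2] col_neq_same_second[of a1 b1 a2] col_neq_same_second[of a1 b2 a2]
      col_neq_same_second[of a1 b2 a3] col_neq_same_second[of a1 b3 a2] col_neq_chain[of a1 b3 c1]
      col_neq_chain[of a1 b3 c2] col_neq_chain[of a1 b3 c3] col_neq_same_first[of a2 b1 b2]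
      col_neq_same_first[of a2 b1 b3] col_neq_same_second[of a2 b1 a3] col_neq_same_first[of a2 b2 b3]
      col_neq_same_second[of a2 b2 a3] col_neq_chain[of a2 b3 c1] col_neq_chain[of a2 b3 c2]
      col_neq_chain[of a2 b3 c3] col_neq_same_first[of a3 b1 b2] col_neq_same_first[of a3 b1 c1]
      col_neq_same_first[of a3 b1 c2] col_neq_same_first[of a3 b1 c3] col_neq_same_first[of a3 b2 c1]
      col_neq_same_first[of a3 b2 c2] col_neq_same_first[of a3 b2 c3] col_neq_same_first[of a3 c1 c2]
      col_neq_same_first[of a3 c1 c3] col_neq_same_first[of a3 c2 c3] col_neq_same_first[of b3 c1 c2]
      col_neq_same_first[of b3 c1 c3] col_neq_same_first[of b3 c2 c3]
      no_rainbow_3[of a1 b1 a2 b3 a3 b2, simplified] no_rainbow_3[of a1 b2 a2 b3 a3 b1, simplified]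
      no_rainbow_3[of a1 b3 a2 b1 a3 b2, simplified] no_rainbow_3[of a1 b3 a2 b2 a3 b1, simplified]
      no_rainbow_4[of a1 b1 a2 b2 a3 c1 b3 c2, simplified] no_rainbow_4[of a1 b1 a2 b2 a3 c1 b3 c3, simplified]
      no_rainbow_4[of a1 b1 a2 b2 a3 c2 b3 c1, simplified] no_rainbow_4[of a1 b1 a2 b2 a3 c2 b3 c3, simplified]
      no_rainbow_4[of a1 b1 a2 b2 a3 c3 b3 c1, simplified] no_rainbow_4[of a1 b1 a2 b2 a3 c3 b3 c2, simplified]
      no_rainbow_4[of a1 b2 a2 b1 a3 c1 b3 c2, simplified] no_rainbow_4[of a1 b2 a2 b1 a3 c1 b3 c3, simplified]
      no_rainbow_4[of a1 b2 a2 b1 a3 c2 b3 c1, simplified] no_rainbow_4[of a1 b2 a2 b1 a3 c2 b3 c3, simplified]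
      no_rainbow_4[of a1 b2 a2 b1 a3 c3 b3 c1, simplified] no_rainbow_4[of a1 b2 a2 b1 a3 c3 b3 c2, simplified]
    unfolding of_bool_def by (smt (z3))
  finally show ?thesis
    by simp
qed

lemma square_card_le: "card {(u, c) \<in> {a1, a2, b1, b2} \<times> {c1, c2, c3}. adj u c} \<le> 8"
proof -
  have "int (card {(u, c) \<in> {a1, a2, b1, b2} \<times> {c1, c2, c3}. adj u c})
      = of_bool (adj a1 c1) + of_bool (adj a1 c2) + of_bool (adj a1 c3)
      + (of_bool (adj a2 c1) + of_bool (adj a2 c2) + of_bool (adj a2 c3)
      + (of_bool (adj b1 c1) + of_bool (adj b1 c2) + of_bool (adj b1 c3)
      + (of_bool (adj b2 c1) + of_bool (adj b2 c2) + of_bool (adj b2 c3))))"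
    by (subst card_adj_eq_sum) simp_all
  also have "\<dots> \<le> 8"
    using adj_blocks vertices_neq
      col_neq_same_first[of a1 b1 c1] col_neq_same_first[of a1 b1 c2] col_neq_same_first[of a1 b1 c3]
      col_neq_chain[of a1 b1 c1] col_neq_chain[of a1 b1 c2] col_neq_chain[of a1 b1 c3]
      col_neq_same_first[of a1 b2 b3] col_neq_same_second[of a1 b2 a2] col_neq_same_first[of a1 b2 c1]
      col_neq_same_first[of a1 b2 c2] col_neq_same_first[of a1 b2 c3] col_neq_chain[of a1 b2 c1]
      col_neq_chain[of a1 b2 c2] col_neq_chain[of a1 b2 c3] col_neq_same_second[of a1 b3 a2]
      col_neq_same_first[of a1 b3 c1] col_neq_same_first[of a1 b3 c2] col_neq_same_first[of a1 b3 c3]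
      col_neq_same_first[of a2 b1 b2] col_neq_same_first[of a2 b1 b3] col_neq_same_second[of a2 b1 a3]
      col_neq_same_first[of a2 b1 c1] col_neq_same_first[of a2 b1 c2] col_neq_same_first[of a2 b1 c3]
      col_neq_chain[of a2 b1 c1] col_neq_chain[of a2 b1 c2] col_neq_chain[of a2 b1 c3]
      col_neq_same_first[of a2 b2 b3] col_neq_same_second[of a2 b2 a3] col_neq_same_first[of a2 b2 c1]
      col_neq_same_first[of a2 b2 c2] col_neq_same_first[of a2 b2 c3] col_neq_chain[of a2 b2 c1]
      col_neq_chain[of a2 b2 c2] col_neq_chain[of a2 b2 c3] col_neq_same_first[of a2 b3 c1]
      col_neq_same_first[of a2 b3 c2] col_neq_same_first[of a2 b3 c3] col_neq_same_first[of a3 b1 b2]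
      col_neq_chain[of a3 b1 c1] col_neq_chain[of a3 b1 c2] col_neq_chain[of a3 b1 c3]
      col_neq_chain[of a3 b2 c1] col_neq_chain[of a3 b2 c2] col_neq_chain[of a3 b2 c3]
      col_neq_same_first[of a1 c1 c2] col_neq_same_first[of a1 c1 c3] col_neq_same_second[of a1 c1 a2]
      col_neq_same_first[of a1 c2 c3] col_neq_same_second[of a1 c2 a2] col_neq_same_second[of a1 c3 a2]
      col_neq_same_first[of a2 c1 c2] col_neq_same_first[of a2 c1 c3] col_neq_same_first[of a2 c2 c3]
      col_neq_same_first[of b1 c1 c2] col_neq_same_first[of b1 c1 c3] col_neq_same_second[of b1 c1 b2]
      col_neq_same_first[of b1 c2 c3] col_neq_same_second[of b1 c2 b2] col_neq_same_second[of b1 c3 b2]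
      col_neq_same_first[of b2 c1 c2] col_neq_same_first[of b2 c1 c3] col_neq_same_first[of b2 c2 c3]
      no_rainbow_3[of a1 b1 a2 b3 a3 b2, simplified] no_rainbow_3[of a1 b2 a2 b3 a3 b1, simplified]
      no_rainbow_3[of a1 b3 a2 b1 a3 b2, simplified] no_rainbow_3[of a1 b3 a2 b2 a3 b1, simplified]
      no_rainbow_4[of a1 b3 a3 b1 a2 c1 b2 c2, simplified] no_rainbow_4[of a1 b3 a3 b1 a2 c1 b2 c3, simplified]
      no_rainbow_4[of a1 b3 a3 b1 a2 c2 b2 c1, simplified] no_rainbow_4[of a1 b3 a3 b1 a2 c2 b2 c3, simplified]
      no_rainbow_4[of a1 b3 a3 b1 a2 c3 b2 c1, simplified] no_rainbow_4[of a1 b3 a3 b1 a2 c3 b2 c2, simplified]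
      no_rainbow_4[of a1 b3 a3 b2 a2 c1 b1 c2, simplified] no_rainbow_4[of a1 b3 a3 b2 a2 c1 b1 c3, simplified]
      no_rainbow_4[of a1 b3 a3 b2 a2 c2 b1 c1, simplified] no_rainbow_4[of a1 b3 a3 b2 a2 c2 b1 c3, simplified]
      no_rainbow_4[of a1 b3 a3 b2 a2 c3 b1 c1, simplified] no_rainbow_4[of a1 b3 a3 b2 a2 c3 b1 c2, simplified]
      no_rainbow_4[of a2 b3 a3 b1 a1 c1 b2 c2, simplified] no_rainbow_4[of a2 b3 a3 b1 a1 c1 b2 c3, simplified]
      no_rainbow_4[of a2 b3 a3 b1 a1 c2 b2 c1, simplified] no_rainbow_4[of a2 b3 a3 b1 a1 c2 b2 c3, simplified]
      no_rainbow_4[of a2 b3 a3 b1 a1 c3 b2 c1, simplified] no_rainbow_4[of a2 b3 a3 b1 a1 c3 b2 c2, simplified]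
      no_rainbow_4[of a2 b3 a3 b2 a1 c1 b1 c2, simplified] no_rainbow_4[of a2 b3 a3 b2 a1 c1 b1 c3, simplified]
      no_rainbow_4[of a2 b3 a3 b2 a1 c2 b1 c1, simplified] no_rainbow_4[of a2 b3 a3 b2 a1 c2 b1 c3, simplified]
      no_rainbow_4[of a2 b3 a3 b2 a1 c3 b1 c1, simplified] no_rainbow_4[of a2 b3 a3 b2 a1 c3 b1 c2, simplified]
    unfolding of_bool_def by (smt (z3))
  finally show ?thesis
    by simp
qed

end

locale max_matching_family =
  fixes F M :: "'a set set"
  assumes finite_F: "finite F" and uniform: "uniform3 F" and linear: "linear_family F"
    and maximum: "maximum_matching F M"
begin

abbreviation X where "X \<equiv> X_M M"

definition linked :: "'a \<Rightarrow> 'a \<Rightarrow> bool" where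
  "linked u v \<longleftrightarrow> u \<in> X \<and> v \<in> X \<and> (\<exists>x. x \<notin> X \<and> {u, v, x} \<in> F)"

definition outer :: "'a \<Rightarrow> 'a \<Rightarrow> 'a" where
  "outer u v = (SOME x. x \<notin> X \<and> {u, v, x} \<in> F)"

lemma M_subset_F: "M \<subseteq> F"
  using maximum by (simp add: maximum_matching_def matching_of_def)

lemma M_disjoint: "A \<in> M \<Longrightarrow> B \<in> M \<Longrightarrow> A \<noteq> B \<Longrightarrow> A \<inter> B = {}"
  using maximum by (simp add: maximum_matching_def matching_of_def)

lemma card_edge: "E \<in> F \<Longrightarrow> card E = 3"
  using uniform by (simp add: uniform3_def)

lemma finite_M: "finite M"
  using M_subset_F finite_F finite_subset by blast

lemma member_subset_X: "A \<in> M \<Longrightarrow> A \<subseteq> X"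
  by (auto simp: X_M_def)

lemma edge_eqI:
  assumes "E \<in> F" "E' \<in> F" "p \<in> E \<inter> E'" "q \<in> E \<inter> E'" "p \<noteq> q"
  shows "E = E'"
proof (rule ccontr)
  assume "E \<noteq> E'"
  then have "card (E \<inter> E') \<le> 1"
    using linear assms(1,2) by (simp add: linear_family_def)
  moreover have "card {p, q} \<le> card (E \<inter> E')"
    using assms by (intro card_mono) (auto simp: card_eq_3_imp_finite card_edge)
  ultimately show False
    using assms(5) by simp
qed

lemma linked_outer:
  assumes "linked u v"
  shows "{u, v, outer u v} \<in> F" "outer u v \<notin> X" "u \<in> X" "v \<in> X"
proof -
  have "\<exists>x. x \<notin> X \<and> {u, v, x} \<in> F"
    using assms by (simp add: linked_def)
  then have "outer u v \<notin> X \<and> {u, v, outer u v} \<in> F"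
    unfolding outer_def by (rule someI_ex)
  then show "{u, v, outer u v} \<in> F" "outer u v \<notin> X"
    by simp_all
  show "u \<in> X" "v \<in> X"
    using assms by (simp_all add: linked_def)
qed

lemma linked_neq:
  assumes "linked u v"
  shows "u \<noteq> v"
proof
  assume "u = v"
  then show False
    using card_edge[OF linked_outer(1)[OF assms]] by (simp add: card_insert_if split: if_splits)
qed

lemma edge_Int_X:
  "linked u v \<Longrightarrow> {u, v, outer u v} \<inter> X = {u, v}"
  using linked_outer by auto

lemma outer_neq:
  assumes "linked u v" "linked u' v'" "{u, v} \<noteq> {u', v'}" "{u, v} \<inter> {u', v'} \<noteq> {}"
  shows "outer u v \<noteq> outer u' v'"
proof
  assume same: "outer u v = outer u' v'"
  have "{u, v, outer u v} \<noteq> {u', v', outer u' v'}"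
    using assms(3) edge_Int_X[OF assms(1)] edge_Int_X[OF assms(2)] by metis
  moreover obtain w where w: "w \<in> {u, v} \<inter> {u', v'}"
    using assms(4) by blast
  moreover have "w \<noteq> outer u v"
    using w linked_outer[OF assms(1)] by auto
  ultimately show False
    using edge_eqI[OF linked_outer(1)[OF assms(1)] linked_outer(1)[OF assms(2)], of w "outer u v"]
      same by auto
qed

lemma matching_exchange_card_le:
  assumes R: "R \<subseteq> M" and S: "S \<subseteq> F" "pairwise disjnt S"
    and S_X: "\<forall>E\<in>S. E \<inter> X \<subseteq> \<Union>R"
  shows "card S \<le> card R"
proof -
  have finite_S: "finite S"
    using S finite_F finite_subset by blast
  have finite_R: "finite R"
    using R finite_M finite_subset by blast
  have off_R: "D \<inter> \<Union>R = {}" if "D \<in> M - R" for D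
    using that R M_disjoint by blast
  have disjoint_S: "D \<inter> E = {}" if "D \<in> M - R" "E \<in> S" for D E
    using that off_R[OF that(1)] S_X member_subset_X[of D] by blast
  have "(M - R) \<inter> S = {}"
    using disjoint_S M_subset_F card_edge by fastforce
  moreover have "matching_of F ((M - R) \<union> S)"
    unfolding matching_of_def
  proof (intro conjI ballI impI)
    show "M - R \<union> S \<subseteq> F"
      using M_subset_F S by blast
    fix D E assume "D \<in> M - R \<union> S" "E \<in> M - R \<union> S" "D \<noteq> E"
    then show "D \<inter> E = {}"
      using M_disjoint[of D E] disjoint_S[of D E] disjoint_S[of E D] S(2)
      unfolding pairwise_def disjnt_def by blast
  qed
  then have "card ((M - R) \<union> S) \<le> card M"
    using maximum by (simp add: maximum_matching_def)
  ultimately show ?thesis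
    using R finite_R finite_M finite_S card_mono[OF finite_M R]
    by (simp add: card_Un_disjoint card_Diff_subset)
qed

lemma rainbow_matching_card_le:
  assumes "R \<subseteq> M"
    and linked: "\<forall>(u, v)\<in>P. linked u v \<and> u \<in> \<Union>R \<and> v \<in> \<Union>R"
    and disjoint: "pairwise (\<lambda>(u, v) (u', v'). {u, v} \<inter> {u', v'} = {}) P"
    and rainbow: "inj_on (\<lambda>(u, v). outer u v) P"
  shows "card P \<le> card R"
proof -
  define edge where "edge = (\<lambda>(u, v). {u, v, outer u v})"
  have edge_disjoint: "edge p \<inter> edge q = {}" if "p \<in> P" "q \<in> P" "p \<noteq> q" for p q
  proof -
    obtain u v u' v' where pq: "p = (u, v)" "q = (u', v')"
      by fastforce
    have "{u, v} \<inter> {u', v'} = {}"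
      using disjoint that pq by (auto simp: pairwise_def)
    moreover have "outer u v \<noteq> outer u' v'"
      using rainbow that pq by (auto simp: inj_on_def)
    moreover have "linked u v" "linked u' v'"
      using linked that pq by auto
    ultimately show ?thesis
      using linked_outer[of u v] linked_outer[of u' v'] pq by (auto simp: edge_def)
  qed
  have "inj_on edge P"
  proof (rule inj_onI)
    fix p q assume "p \<in> P" "q \<in> P" "edge p = edge q"
    moreover have "edge p \<noteq> {}"
      by (simp add: edge_def split: prod.splits)
    ultimately show "p = q"
      using edge_disjoint by blast
  qed
  then have "card P = card (edge ` P)"
    by (simp add: card_image)
  also have "\<dots> \<le> card R"
  proof (rule matching_exchange_card_le[OF assms(1)])
    show "edge ` P \<subseteq> F"
      using linked linked_outer by (auto simp: edge_def)
    show "pairwise disjnt (edge ` P)"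
      using edge_disjoint by (intro pairwise_imageI) (simp add: disjnt_def)
    show "\<forall>E\<in>edge ` P. E \<inter> X \<subseteq> \<Union>R"
      using linked linked_outer(2) by (fastforce simp: edge_def)
  qed
  finally show ?thesis .
qed

lemma no_rainbow_triple:
  assumes "P \<in> M" "Q \<in> M" "distinct [u1, v1, u2, v2, u3, v3]" "{u1, v1, u2, v2, u3, v3} \<subseteq> P \<union> Q"
    "linked u1 v1" "linked u2 v2" "linked u3 v3" "distinct [outer u1 v1, outer u2 v2, outer u3 v3]"
  shows False
proof -
  let ?P = "{(u1, v1), (u2, v2), (u3, v3)}"
  have "card ?P \<le> card {P, Q}"
  proof (rule rainbow_matching_card_le)
    show "{P, Q} \<subseteq> M"
      using assms by simp
    show "\<forall>(u, v)\<in>?P. linked u v \<and> u \<in> \<Union>{P, Q} \<and> v \<in> \<Union>{P, Q}"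
      using assms(4-7) by auto
    show "pairwise (\<lambda>(u, v) (u', v'). {u, v} \<inter> {u', v'} = {}) ?P"
      using assms(3) by (auto simp: pairwise_insert)
    show "inj_on (\<lambda>(u, v). outer u v) ?P"
      using assms(8) by auto
  qed
  moreover have "card {P, Q} \<le> 2"
    by (simp add: card_insert_if split: if_splits)
  ultimately show False
    using assms(3) by simp
qed

lemma no_rainbow_quadruple:
  assumes "A \<in> M" "B \<in> M" "C \<in> M" "distinct [u1, v1, u2, v2, u3, v3, u4, v4]"
    "{u1, v1, u2, v2, u3, v3, u4, v4} \<subseteq> A \<union> B \<union> C"
    "linked u1 v1" "linked u2 v2" "linked u3 v3" "linked u4 v4"
    "distinct [outer u1 v1, outer u2 v2, outer u3 v3, outer u4 v4]"
  shows False
proof -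
  let ?P = "{(u1, v1), (u2, v2), (u3, v3), (u4, v4)}"
  have "card ?P \<le> card {A, B, C}"
  proof (rule rainbow_matching_card_le)
    show "{A, B, C} \<subseteq> M"
      using assms by simp
    show "\<forall>(u, v)\<in>?P. linked u v \<and> u \<in> \<Union>{A, B, C} \<and> v \<in> \<Union>{A, B, C}"
      using assms(5-9) by auto
    show "pairwise (\<lambda>(u, v) (u', v'). {u, v} \<inter> {u', v'} = {}) ?P"
      using assms(4) by (auto simp: pairwise_insert)
    show "inj_on (\<lambda>(u, v). outer u v) ?P"
      using assms(10) by auto
  qed
  moreover have "card {A, B, C} \<le> 3"
    by (simp add: card_insert_if split: if_splits)
  ultimately show False
    using assms(4) by simp
qed

lemma card_D2_pair:
  assumes "P \<in> M" "Q \<in> M" "P \<noteq> Q"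
  shows "card (D2_pair F M P Q) = card {(u, v) \<in> P \<times> Q. linked u v}"
proof -
  let ?T = "{(u, v) \<in> P \<times> Q. linked u v}"
  let ?edge = "\<lambda>(u, v). {u, v, outer u v}"
  have PQ: "P \<inter> Q = {}" "P \<subseteq> X" "Q \<subseteq> X"
    using assms M_disjoint member_subset_X by auto
  have "inj_on ?edge ?T"
  proof (rule inj_onI, clarify)
    fix u v u' v'
    assume uv: "u \<in> P" "v \<in> Q" "linked u v" and uv': "u' \<in> P" "v' \<in> Q" "linked u' v'"
      and "{u, v, outer u v} = {u', v', outer u' v'}"
    then have "{u, v} = {u', v'}"
      using edge_Int_X by metis
    then show "u = u' \<and> v = v'"
      using uv uv' PQ(1) by (auto simp: doubleton_eq_iff)
  qed
  moreover have "?edge ` ?T = D2_pair F M P Q"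
  proof (intro equalityI subsetI)
    fix E assume "E \<in> ?edge ` ?T"
    then obtain u v where uv: "u \<in> P" "v \<in> Q" "linked u v" "E = {u, v, outer u v}"
      by auto
    then have "card (E \<inter> X) = 2"
      using edge_Int_X linked_neq by simp
    then show "E \<in> D2_pair F M P Q"
      using uv linked_outer(1) by (auto simp: D2_pair_def D2_def)
  next
    fix E assume "E \<in> D2_pair F M P Q"
    then obtain u v where E: "E \<in> F" "card (E \<inter> X) = 2" "u \<in> E \<inter> P" "v \<in> E \<inter> Q"
      by (auto simp: D2_pair_def D2_def)
    have finite_E: "finite E"
      using card_eq_3_imp_finite card_edge E(1) by blast
    have "u \<noteq> v" "u \<in> X" "v \<in> X"
      using E(3,4) PQ by blast+
    then have "{u, v} \<subseteq> E \<inter> X" "card {u, v} = card (E \<inter> X)"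
      using E by auto
    then have E_X: "E \<inter> X = {u, v}"
      using finite_E by (metis card_subset_eq finite_Int)
    have "card (E - X) = 1"
      using E card_edge finite_E by (simp add: card_Diff_subset_Int)
    then obtain x where "E - X = {x}"
      by (auto simp: card_1_singleton_iff)
    then have x: "x \<notin> X" "E = {u, v, x}"
      using E_X by auto
    then have linked: "linked u v"
      using E(1) \<open>u \<in> X\<close> \<open>v \<in> X\<close> by (auto simp: linked_def)
    have "{u, v, outer u v} = E"
      using edge_eqI[OF linked_outer(1)[OF linked] E(1), of u v] x \<open>u \<noteq> v\<close> by auto
    then show "E \<in> ?edge ` ?T"
      using E linked by auto
  qed
  ultimately show ?thesis
    using card_image by fastforce
qed

lemma D2_pair_eq_8_cases:
  assumes "A \<in> M" "B \<in> M" "A \<noteq> B" "card (D2_pair F M A B) = 8"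
  obtains a1 a2 a3 b1 b2 b3 where "A = {a1, a2, a3}" "B = {b1, b2, b3}"
    "distinct [a1, a2, a3, b1, b2, b3]"
    "linked a1 b1" "linked a1 b2" "linked a1 b3" "linked a2 b1" "linked a2 b2" "linked a2 b3"
    "linked a3 b1" "linked a3 b2"
proof -
  let ?T = "{(u, v) \<in> A \<times> B. linked u v}"
  have card_AB: "card A = 3" "card B = 3"
    using assms(1,2) M_subset_F card_edge by auto
  then have finite_AB: "finite (A \<times> B)"
    using card_eq_3_imp_finite by blast
  have "?T \<subseteq> A \<times> B"
    by auto
  moreover have "Suc (card ?T) = card (A \<times> B)"
    using assms card_D2_pair card_AB by (simp add: card_cartesian_product)
  ultimately obtain p where "p \<in> A \<times> B" and T: "?T = A \<times> B - {p}"
    by (rule subset_eq_Diff_singleton_if_card_Suc[OF finite_AB])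
  then obtain a3 b3 where ab3: "a3 \<in> A" "b3 \<in> B" and T: "?T = A \<times> B - {(a3, b3)}"
    by (cases p) blast
  have "card (A - {a3}) = 2" "card (B - {b3}) = 2"
    using ab3 card_AB card_eq_3_imp_finite by simp_all
  then obtain a1 a2 b1 b2 where "A - {a3} = {a1, a2}" "a1 \<noteq> a2" "B - {b3} = {b1, b2}" "b1 \<noteq> b2"
    by (auto simp: card_2_iff)
  moreover have "A \<inter> B = {}"
    using assms M_disjoint by blast
  ultimately have A: "A = {a1, a2, a3}" and B: "B = {b1, b2, b3}"
    and distinct: "distinct [a1, a2, a3, b1, b2, b3]"
    using ab3 by auto
  have linked: "linked a b" if "a \<in> A" "b \<in> B" "(a, b) \<noteq> (a3, b3)" for a b
  proof -
    have "(a, b) \<in> ?T"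
      unfolding T using that by simp
    then show ?thesis
      by simp
  qed
  show thesis
    by (rule that[OF A B distinct]; rule linked) (use distinct in \<open>simp_all add: A B\<close>)
qed


lemma three_members_rainbow_free:
  assumes "A \<in> M" "B \<in> M" "C \<in> M" "A \<noteq> B" "A \<noteq> C" "B \<noteq> C" "card (D2_pair F M A B) = 8"
  obtains a1 a2 a3 b1 b2 b3 c1 c2 c3 where "A = {a1, a2, a3}" "B = {b1, b2, b3}" "C = {c1, c2, c3}"
    "rainbow_free_three_blocks linked outer a1 a2 a3 b1 b2 b3 c1 c2 c3"
proof -
  obtain a1 a2 a3 b1 b2 b3 where A: "A = {a1, a2, a3}" and B: "B = {b1, b2, b3}"
    and distinct_AB: "distinct [a1, a2, a3, b1, b2, b3]"
    and linked_AB: "linked a1 b1" "linked a1 b2" "linked a1 b3" "linked a2 b1" "linked a2 b2"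
      "linked a2 b3" "linked a3 b1" "linked a3 b2"
    by (rule D2_pair_eq_8_cases[OF assms(1,2,4,7)])
  obtain c1 c2 c3 where C: "C = {c1, c2, c3}" and distinct_C: "distinct [c1, c2, c3]"
    using card_edge[of C] M_subset_F assms(3) by (auto simp: card_3_iff)
  have "A \<inter> C = {}" "B \<inter> C = {}"
    using assms M_disjoint by auto
  then have distinct: "distinct [a1, a2, a3, b1, b2, b3, c1, c2, c3]"
    using distinct_AB distinct_C by (auto simp: A B C)
  show thesis
  proof (rule that[OF A B C], unfold_locales)
  qed (fact distinct outer_neq linked_AB
      no_rainbow_triple[OF assms(1,2), unfolded A B Un_insert_left Un_empty_left]
      no_rainbow_quadruple[OF assms(1-3), unfolded A B C Un_insert_left Un_empty_left])+
qed
end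

theorem proposition4:
  fixes F M :: "'a set set" and A B C :: "'a set"
  assumes "finite F"
    and "uniform3 F"
    and "linear_family F"
    and "maximum_matching F M"
    and "A \<in> M" and "B \<in> M" and "C \<in> M"
    and "A \<noteq> B" and "A \<noteq> C" and "B \<noteq> C"
    and "card (D2_pair F M A B) = 8"
  shows "card (D2_pair F M A C) + card (D2_pair F M B C) \<le> 12"
proof -
  interpret max_matching_family F M
    using assms(1-4) by unfold_locales
  obtain a1 a2 a3 b1 b2 b3 c1 c2 c3 where A: "A = {a1, a2, a3}" and B: "B = {b1, b2, b3}"
    and C: "C = {c1, c2, c3}" and blocks: "rainbow_free_three_blocks linked outer a1 a2 a3 b1 b2 b3 c1 c2 c3"
    by (rule three_members_rainbow_free[OF assms(5-11)])
  interpret rainbow_free_three_blocks linked outer a1 a2 a3 b1 b2 b3 c1 c2 c3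
    by (fact blocks)
  have "card (D2_pair F M A C) + card (D2_pair F M B C)
      = card {(u, c) \<in> A \<times> C. linked u c} + card {(u, c) \<in> B \<times> C. linked u c}"
    using assms by (simp add: card_D2_pair)
  also have "\<dots> = card {(u, c) \<in> (A \<union> B) \<times> C. linked u c}"
    by (rule card_filter_Times_Un[symmetric]) (auto simp: A B C)
  also have "A \<union> B = {a3, b3} \<union> {a1, a2, b1, b2}"
    by (auto simp: A B)
  also have "card {(u, c) \<in> ({a3, b3} \<union> {a1, a2, b1, b2}) \<times> C. linked u c}
      = card {(u, c) \<in> {a3, b3} \<times> C. linked u c} + card {(u, c) \<in> {a1, a2, b1, b2} \<times> C. linked u c}"
    by (rule card_filter_Times_Un) (auto simp: C)
  also have "\<dots> \<le> 4 + 8"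
    using missing_pair_card_le square_card_le by (intro add_mono) (simp_all add: C)
  finally show ?thesis
    by simp
qed

end
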